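(* Let $A$ and $B$ be hyperbolic elements in $\mathrm{Sp}(1,1)$ having a common fixed point on $\partial\mathbf H^1_{\mathbb H}$. Then (the images of) $A$ and $B$ form a strongly doubly reversible pair in $\mathrm{PSp}(1,1)$ if and only if $A$ and $B$ have the same fixed points.
   Context: $\mathrm{Sp}(1,1)$ is the group of $2\times 2$ quaternionic matrices preserving the Hermitian form $\langle \mathbf z,\mathbf w\rangle=\bar w_2 z_1+\bar w_1 z_2$ on the right $\mathbb H$-vector space $\mathbb H^2$, $\mathrm{PSp}(1,1)=\mathrm{Sp}(1,1)/\{\pm I\}$, and $\partial\mathbf H^1_{\mathbb H}$ is the set of right quaternionic lines of nonzero null vectors. An element is hyperbolic if it has exactly two fixed points on $\partial\mathbf H^1_{\mathbb H}$. A pair $(g_1,g_2)$ in $\mathrm{PSp}(1,1)$ is strongly doubly reversible if there is $g\in\mathrm{PSp}(1,1)$ with $g^2=1$, $g g_1 g^{-1}=g_1^{-1}$ and $g g_2 g^{-1}=g_2^{-1}$. *)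

theory Defs
  imports Main "HOL.Real"
begin

datatype quat = Quat (Re: real) (Im1: real) (Im2: real) (Im3: real)

definition qzero :: quat where "qzero = Quat 0 0 0 0"
definition qone :: quat where "qone = Quat 1 0 0 0"

definition qadd :: "quat \<Rightarrow> quat \<Rightarrow> quat" where
  "qadd p q = Quat (Re p + Re q) (Im1 p + Im1 q) (Im2 p + Im2 q) (Im3 p + Im3 q)"

definition qneg :: "quat \<Rightarrow> quat" where
  "qneg p = Quat (- Re p) (- Im1 p) (- Im2 p) (- Im3 p)"

definition qmul :: "quat \<Rightarrow> quat \<Rightarrow> quat" where
  "qmul p q = Quat
     (Re p * Re q - Im1 p * Im1 q - Im2 p * Im2 q - Im3 p * Im3 q)
     (Re p * Im1 q + Im1 p * Re q + Im2 p * Im3 q - Im3 p * Im2 q)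
     (Re p * Im2 q - Im1 p * Im3 q + Im2 p * Re q + Im3 p * Im1 q)
     (Re p * Im3 q + Im1 p * Im2 q - Im2 p * Im1 q + Im3 p * Re q)"

definition qcnj :: "quat \<Rightarrow> quat" where
  "qcnj p = Quat (Re p) (- Im1 p) (- Im2 p) (- Im3 p)"

type_synonym qvec = "quat \<times> quat"

definition vscale :: "qvec \<Rightarrow> quat \<Rightarrow> qvec" where
  "vscale z l = (qmul (fst z) l, qmul (snd z) l)"

definition vzero :: qvec where "vzero = (qzero, qzero)"

definition hform :: "qvec \<Rightarrow> qvec \<Rightarrow> quat" where
  "hform z w = qadd (qmul (qcnj (snd w)) (fst z)) (qmul (qcnj (fst w)) (snd z))"

text \<open>A 2x2 matrix [[a, b], [c, d]] is stored as the tuple (a, b, c, d).\<close>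
type_synonym qmat = "quat \<times> quat \<times> quat \<times> quat"

fun mat_e11 :: "qmat \<Rightarrow> quat" where "mat_e11 (a, b, c, d) = a"
fun mat_e12 :: "qmat \<Rightarrow> quat" where "mat_e12 (a, b, c, d) = b"
fun mat_e21 :: "qmat \<Rightarrow> quat" where "mat_e21 (a, b, c, d) = c"
fun mat_e22 :: "qmat \<Rightarrow> quat" where "mat_e22 (a, b, c, d) = d"

definition mat_one :: qmat where "mat_one = (qone, qzero, qzero, qone)"

definition mat_neg :: "qmat \<Rightarrow> qmat" where
  "mat_neg M = (qneg (mat_e11 M), qneg (mat_e12 M), qneg (mat_e21 M), qneg (mat_e22 M))"

definition mat_mul :: "qmat \<Rightarrow> qmat \<Rightarrow> qmat" where
  "mat_mul M N =
    (qadd (qmul (mat_e11 M) (mat_e11 N)) (qmul (mat_e12 M) (mat_e21 N)),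
     qadd (qmul (mat_e11 M) (mat_e12 N)) (qmul (mat_e12 M) (mat_e22 N)),
     qadd (qmul (mat_e21 M) (mat_e11 N)) (qmul (mat_e22 M) (mat_e21 N)),
     qadd (qmul (mat_e21 M) (mat_e12 N)) (qmul (mat_e22 M) (mat_e22 N)))"

text \<open>Matrix acting on a column vector (left action, commuting with right scalars).\<close>
definition mat_app :: "qmat \<Rightarrow> qvec \<Rightarrow> qvec" where
  "mat_app M z =
    (qadd (qmul (mat_e11 M) (fst z)) (qmul (mat_e12 M) (snd z)),
     qadd (qmul (mat_e21 M) (fst z)) (qmul (mat_e22 M) (snd z)))"

definition mat_invertible :: "qmat \<Rightarrow> bool" where
  "mat_invertible M \<longleftrightarrow> (\<exists>N. mat_mul M N = mat_one \<and> mat_mul N M = mat_one)"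

definition mat_inv :: "qmat \<Rightarrow> qmat" where
  "mat_inv M = (THE N. mat_mul M N = mat_one \<and> mat_mul N M = mat_one)"

definition Sp11 :: "qmat set" where
  "Sp11 = {M. mat_invertible M \<and> (\<forall>z w. hform (mat_app M z) (mat_app M w) = hform z w)}"

text \<open>Equality of images in PSp(1,1) = Sp(1,1)/{+-I}.\<close>
definition psp_eq :: "qmat \<Rightarrow> qmat \<Rightarrow> bool" where
  "psp_eq M N \<longleftrightarrow> M = N \<or> M = mat_neg N"

text \<open>Strongly doubly reversible pair (of the images of A, B) in PSp(1,1):
  some g in PSp(1,1) (lifted to Sp(1,1)) with g^2 = 1, g g1 g^-1 = g1^-1, g g2 g^-1 = g2^-1.\<close>
definition strongly_doubly_reversible :: "qmat \<Rightarrow> qmat \<Rightarrow> bool" where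
  "strongly_doubly_reversible A B \<longleftrightarrow>
     (\<exists>g\<in>Sp11. psp_eq (mat_mul g g) mat_one
        \<and> psp_eq (mat_mul (mat_mul g A) (mat_inv g)) (mat_inv A)
        \<and> psp_eq (mat_mul (mat_mul g B) (mat_inv g)) (mat_inv B))"

text \<open>Right quaternionic line spanned by a nonzero vector z (as the set of its nonzero vectors).\<close>
definition qline :: "qvec \<Rightarrow> qvec set" where
  "qline z = {vscale z l | l. l \<noteq> qzero}"

definition bdry :: "qvec set set" where
  "bdry = {qline z | z. z \<noteq> vzero \<and> hform z z = qzero}"

definition fixpts :: "qmat \<Rightarrow> qvec set set" where
  "fixpts M = {p \<in> bdry. \<exists>z. p = qline z \<and> qline (mat_app M z) = qline z}"

definition hyperbolic :: "qmat \<Rightarrow> bool" where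
  "hyperbolic M \<longleftrightarrow> finite (fixpts M) \<and> card (fixpts M) = 2"

end

theory Submission
  imports Defs "HOL-Library.Product_Plus" "HOL-Analysis.Linear_Algebra"
begin

text \<open>
  An element g with g A g^-1 = \<plusminus>A^-1 permutes the fixed points of A. If the fixed-point pairs
  of A and B share exactly one point [u], a common reverser g must therefore fix [u], say
  g u = u p; with A u = u a, reversal gives a p a = \<plusminus>p, so |a| = 1. Normalising the fixed
  points of A to a null frame u, v (\<langle>u,v\<rangle> = 1), a unit eigenvalue forces A v = v a, and then
  u + v y is a third fixed null line for every nonzero pure y commuting with a, contradicting
  hyperbolicity.

  Conversely, if A and B fix the same null frame u, v with eigenvalues a, b at u, pick a nonzero
  pure quaternion y orthogonal to the imaginary parts of a and b, so that a y = y (qcnj a)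
  and b y = y (qcnj b). The matrix sending u to -v y^-1 and v to u y maps the null frame to a
  null frame, hence lies in Sp(1,1); it squares to -I and conjugates A and B to their inverses.
\<close>

section \<open>Quaternions as a division ring\<close>

definition qnorm2 :: "quat \<Rightarrow> real" where
  "qnorm2 p = (quat.Re p)\<^sup>2 + (Im1 p)\<^sup>2 + (Im2 p)\<^sup>2 + (Im3 p)\<^sup>2"

lemma qnorm2_eq_qzero_iff: "qnorm2 p = 0 \<longleftrightarrow> p = qzero"
  by (cases p) (simp add: qnorm2_def qzero_def add_nonneg_eq_0_iff)

instantiation quat :: division_ring
begin
definition "0 = qzero"
definition "1 = qone"
definition "p + q = qadd p q"
definition "- p = qneg p"
definition "p - q = qadd p (qneg q)"
definition "p * q = qmul p q"
definition "inverse p = qmul (qcnj p) (Quat (1 / qnorm2 p) 0 0 0)"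
definition "divide p (q::quat) = p * inverse q"
instance
proof
  fix p :: quat
  assume "p \<noteq> 0"
  hence "qnorm2 p \<noteq> 0" by (simp add: qnorm2_eq_qzero_iff zero_quat_def)
  thus "inverse p * p = 1" "p * inverse p = 1"
    by (simp_all add: inverse_quat_def times_quat_def one_quat_def qmul_def qcnj_def qone_def,
        simp_all add: qnorm2_def divide_simps power2_eq_square)
qed (simp_all add: zero_quat_def one_quat_def plus_quat_def uminus_quat_def minus_quat_def
    times_quat_def inverse_quat_def divide_quat_def qzero_def qone_def qadd_def qneg_def qmul_def
    qcnj_def qnorm2_def algebra_simps)
end

lemmas quat_class_ops = zero_quat_def[symmetric] one_quat_def[symmetric] plus_quat_def[symmetric]
  uminus_quat_def[symmetric] times_quat_def[symmetric]

lemmas quat_components = zero_quat_def one_quat_def plus_quat_def uminus_quat_def times_quat_def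
  qzero_def qone_def qadd_def qneg_def qmul_def qcnj_def qnorm2_def

lemma qcnj_mult: "qcnj (p * q) = qcnj q * qcnj p"
  by (simp add: quat_components algebra_simps)

lemma qcnj_add: "qcnj (p + q) = qcnj p + qcnj q"
  by (simp add: quat_components)

lemma qcnj_qcnj [simp]: "qcnj (qcnj p) = p"
  by (simp add: qcnj_def)

lemma qcnj_zero [simp]: "qcnj 0 = 0"
  by (simp add: quat_components)

lemma qcnj_one [simp]: "qcnj 1 = 1"
  by (simp add: quat_components)

lemma qcnj_eq_0_iff [simp]: "qcnj p = 0 \<longleftrightarrow> p = 0"
  by (cases p) (auto simp: quat_components)

lemma qcnj_inverse: "qcnj (inverse p) = inverse (qcnj p)"
proof (cases "p = 0")
  case False
  hence "qcnj p * qcnj (inverse p) = 1" by (simp flip: qcnj_mult)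
  thus ?thesis by (rule inverse_unique [symmetric])
qed simp

lemma qnorm2_nonneg: "0 \<le> qnorm2 p"
  by (simp add: qnorm2_def)

lemma qnorm2_eq_0 [simp]: "qnorm2 p = 0 \<longleftrightarrow> p = 0"
  by (simp add: qnorm2_eq_qzero_iff zero_quat_def)

lemma qnorm2_mult: "qnorm2 (p * q) = qnorm2 p * qnorm2 q"
  by (simp add: quat_components power2_eq_square algebra_simps)

lemma qnorm2_minus [simp]: "qnorm2 (- p) = qnorm2 p"
  by (simp add: quat_components)

lemma inverse_eq_qcnj_if_unit: "qnorm2 p = 1 \<Longrightarrow> inverse p = qcnj p"
  by (simp add: inverse_quat_def quat_components)

lemma exists_pure_commuting: "\<exists>y. y \<noteq> 0 \<and> qcnj y = - y \<and> y * a = a * y"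
proof (cases "Im1 a = 0 \<and> Im2 a = 0 \<and> Im3 a = 0")
  case True
  thus ?thesis by (intro exI [of _ "Quat 0 1 0 0"]) (simp add: quat_components)
next
  case False
  thus ?thesis
    by (intro exI [of _ "Quat 0 (Im1 a) (Im2 a) (Im3 a)"])
      (auto simp: quat_components algebra_simps)
qed

lemma exists_pure_mult_eq_mult_qcnj:
  "\<exists>y. y \<noteq> 0 \<and> qcnj y = - y \<and> a * y = y * qcnj a \<and> b * y = y * qcnj b"
proof -
  define im :: "quat \<Rightarrow> real \<times> real \<times> real" where "im p = (Im1 p, Im2 p, Im3 p)" for p
  have "dim {im a, im b} < DIM(real \<times> real \<times> real)"
    using dim_le_card' [of "{im a, im b}"] by (cases "im a = im b") auto
  then obtain y where "y \<noteq> 0" and orth: "\<And>x. x \<in> span {im a, im b} \<Longrightarrow> orthogonal y x"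
    using orthogonal_to_subspace_exists by blast
  moreover obtain y1 y2 y3 where "y = (y1, y2, y3)" by (cases y)
  moreover have "inner y (im a) = 0" "inner y (im b) = 0"
    using orth span_base orthogonal_def by blast+
  \<comment> \<open>for pure y, a y = y (qcnj a) says exactly that y is orthogonal to the imaginary part of a\<close>
  ultimately show ?thesis
    by (intro exI [of _ "Quat 0 y1 y2 y3"])
      (auto simp: im_def quat_components zero_prod_def algebra_simps)
qed

section \<open>The Hermitian form and null frames\<close>

lemma vzero_eq: "vzero = 0"
  by (simp add: vzero_def zero_prod_def quat_class_ops)

lemma vscale_eq: "vscale z l = (fst z * l, snd z * l)"
  by (simp add: vscale_def quat_class_ops)

lemma hform_eq: "hform z w = qcnj (snd w) * fst z + qcnj (fst w) * snd z"
  by (simp add: hform_def quat_class_ops)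

lemma mat_app_eq:
  "mat_app M z = (mat_e11 M * fst z + mat_e12 M * snd z, mat_e21 M * fst z + mat_e22 M * snd z)"
  by (simp add: mat_app_def quat_class_ops)

lemma vscale_vscale [simp]: "vscale (vscale z l) m = vscale z (l * m)"
  by (simp add: vscale_eq mult.assoc)

lemma vscale_one [simp]: "vscale z 1 = z"
  by (simp add: vscale_eq)

lemma vscale_zero [simp]: "vscale z 0 = 0"
  by (simp add: vscale_eq zero_prod_def)

lemma vscale_add_left: "vscale (z + w) l = vscale z l + vscale w l"
  by (simp add: vscale_eq algebra_simps)

lemma vscale_cancel: "z \<noteq> 0 \<Longrightarrow> vscale z l = vscale z m \<Longrightarrow> l = m"
  by (cases z) (auto simp: vscale_eq zero_prod_def)

lemma vscale_eq_0_iff [simp]: "vscale z l = 0 \<longleftrightarrow> z = 0 \<or> l = 0"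
  by (cases z) (auto simp: vscale_eq zero_prod_def)

lemma hform_vscale_left [simp]: "hform (vscale z l) w = hform z w * l"
  by (simp add: hform_eq vscale_eq algebra_simps)

lemma hform_vscale_right [simp]: "hform z (vscale w l) = qcnj l * hform z w"
  by (simp add: hform_eq vscale_eq algebra_simps qcnj_mult)

lemma hform_add_left [simp]: "hform (z + z') w = hform z w + hform z' w"
  by (simp add: hform_eq algebra_simps)

lemma hform_add_right [simp]: "hform z (w + w') = hform z w + hform z w'"
  by (simp add: hform_eq algebra_simps qcnj_add)

lemma hform_diff_left [simp]: "hform (z - z') w = hform z w - hform z' w"
  by (simp add: hform_eq algebra_simps)

lemma hform_zero_left [simp]: "hform 0 w = 0"
  by (simp add: hform_eq zero_prod_def)

lemma hform_swap: "hform w z = qcnj (hform z w)"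
  by (simp add: hform_eq qcnj_add qcnj_mult add.commute)

lemma mat_app_vscale [simp]: "mat_app M (vscale z l) = vscale (mat_app M z) l"
  by (simp add: mat_app_eq vscale_eq algebra_simps)

lemma mat_app_add [simp]: "mat_app M (z + w) = mat_app M z + mat_app M w"
  by (simp add: mat_app_eq algebra_simps)

lemma mat_app_zero [simp]: "mat_app M 0 = 0"
  by (simp add: mat_app_eq zero_prod_def)

lemma mat_app_mat_mul: "mat_app (mat_mul M N) z = mat_app M (mat_app N z)"
  by (cases M; cases N) (simp add: mat_app_eq mat_mul_def quat_class_ops algebra_simps)

lemma mat_app_mat_one [simp]: "mat_app mat_one z = z"
  by (simp add: mat_app_eq mat_one_def quat_class_ops)

lemma mat_app_mat_neg: "mat_app (mat_neg M) z = vscale (mat_app M z) (- 1)"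
  by (cases M) (simp add: mat_app_eq mat_neg_def vscale_eq quat_class_ops algebra_simps)

lemma mat_eqI:
  assumes "\<And>z. mat_app M z = mat_app N z"
  shows "M = N"
  using assms [of "(1, 0)"] assms [of "(0, 1)"] by (cases M; cases N) (simp add: mat_app_eq)

lemma qline_vscale_subset: "k \<noteq> 0 \<Longrightarrow> qline (vscale x k) \<subseteq> qline x"
  by (fastforce simp: qline_def quat_class_ops)

lemma qline_eq_iff: "qline z = qline w \<longleftrightarrow> (\<exists>m. m \<noteq> 0 \<and> w = vscale z m)"
proof
  have "w \<in> qline w" unfolding qline_def by (auto intro: exI [of _ qone] simp: quat_class_ops)
  thus "qline z = qline w \<Longrightarrow> \<exists>m. m \<noteq> 0 \<and> w = vscale z m"
    unfolding qline_def by (auto simp: quat_class_ops)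
next
  assume "\<exists>m. m \<noteq> 0 \<and> w = vscale z m"
  then obtain m where "m \<noteq> 0" "w = vscale z m" by blast
  moreover from this have "z = vscale w (inverse m)" by simp
  ultimately show "qline z = qline w"
    using qline_vscale_subset by (metis inverse_nonzero_iff_nonzero subset_antisym)
qed

lemma isotropic_orthogonal_imp_multiple:
  assumes "u \<noteq> 0" and "hform u u = 0" and "hform w u = 0"
  shows "\<exists>m. w = vscale u m"
proof -
  obtain u1 u2 where u: "u = (u1, u2)" by (cases u)
  obtain w1 w2 where w: "w = (w1, w2)" by (cases w)
  show ?thesis
  proof (cases "u1 = 0")
    case True
    with assms(1) u have "u2 \<noteq> 0" by (simp add: zero_prod_def)
    have "hform w (vscale u (inverse u2)) = w1"
      using \<open>u2 \<noteq> 0\<close> True by (simp add: u w hform_eq vscale_eq)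
    hence "w1 = 0" using assms(3) by simp
    hence "w = vscale u (inverse u2 * w2)"
      using \<open>u2 \<noteq> 0\<close> True by (simp add: u w vscale_eq mult.assoc [symmetric])
    thus ?thesis ..
  next
    case False
    define s where "s = u2 * inverse u1"
    have u': "vscale u (inverse u1) = (1, s)" using False by (simp add: u vscale_eq s_def)
    have "hform (vscale u (inverse u1)) (vscale u (inverse u1)) = 0" using assms(2) by simp
    hence "qcnj s + s = 0" unfolding u' by (simp add: hform_eq)
    moreover have "hform w (vscale u (inverse u1)) = 0" using assms(3) by simp
    hence "qcnj s * w1 + w2 = 0" unfolding u' by (simp add: w hform_eq)
    ultimately have "w2 = s * w1"
      by (simp add: eq_neg_iff_add_eq_0 [symmetric] add.commute [of "qcnj s * w1"])
    have "vscale u (inverse u1 * w1) = vscale (1, s) w1" by (metis u' vscale_vscale)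
    also have "\<dots> = w" by (simp add: vscale_eq w \<open>w2 = s * w1\<close>)
    finally have "w = vscale u (inverse u1 * w1)" ..
    thus ?thesis ..
  qed
qed

lemma hform_eq_0_if_qline_eq: "qline u = qline w \<Longrightarrow> hform u u = 0 \<Longrightarrow> hform w u = 0"
  by (auto simp: qline_eq_iff)

lemma hform_ne_0_if_qline_ne:
  assumes "u \<noteq> 0" and "hform u u = 0" and "qline u \<noteq> qline v" and "v \<noteq> 0"
  shows "hform u v \<noteq> 0"
proof
  assume "hform u v = 0"
  hence "hform v u = 0" by (metis hform_swap qcnj_zero)
  then obtain m where "v = vscale u m" using isotropic_orthogonal_imp_multiple assms(1,2) by blast
  with assms(3,4) show False by (auto simp: qline_eq_iff)
qed

definition null_frame :: "qvec \<Rightarrow> qvec \<Rightarrow> bool" where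
  "null_frame u v \<longleftrightarrow> hform u u = 0 \<and> hform v v = 0 \<and> hform u v = 1"

lemma null_frameD:
  assumes "null_frame u v"
  shows "hform u u = 0" "hform v v = 0" "hform u v = 1" "hform v u = 1" "u \<noteq> 0" "v \<noteq> 0"
  using assms hform_swap [of v u] hform_zero_left [of v] hform_swap [of 0 u]
  by (auto simp: null_frame_def)

lemma null_frame_normalize:
  assumes "u \<noteq> 0" "hform u u = 0" "v \<noteq> 0" "hform v v = 0" "qline u \<noteq> qline v"
  shows "\<exists>v'. null_frame u v' \<and> qline v' = qline v"
proof -
  define c where "c = hform u v"
  have "c \<noteq> 0" using hform_ne_0_if_qline_ne assms by (simp add: c_def)
  define v' where "v' = vscale v (inverse (qcnj c))"
  have "null_frame u v'"
    using assms(2,4) \<open>c \<noteq> 0\<close> by (simp add: null_frame_def v'_def c_def [symmetric] qcnj_inverse)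
  moreover have "qline v' = qline v"
    using \<open>c \<noteq> 0\<close> by (metis qline_eq_iff v'_def inverse_nonzero_iff_nonzero qcnj_eq_0_iff)
  ultimately show ?thesis by blast
qed

lemma null_frame_decomp:
  assumes "null_frame u v"
  shows "z = vscale u (hform z v) + vscale v (hform z u)"
proof -
  note uv = null_frameD [OF assms]
  define r where "r = z - (vscale u (hform z v) + vscale v (hform z u))"
  have "hform r u = 0" by (simp add: r_def uv)
  then obtain m where m: "r = vscale u m" using isotropic_orthogonal_imp_multiple uv(1,5) by blast
  have "m = hform r v" by (simp add: m uv)
  also have "\<dots> = 0" by (simp add: r_def uv)
  finally show ?thesis using m by (simp add: r_def)
qed

lemma null_frame_hform:
  assumes "null_frame u v"
  shows "hform (vscale u a + vscale v b) (vscale u c + vscale v d) = qcnj d * a + qcnj c * b"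
  using null_frameD [OF assms] by (simp add: add.commute)

lemma null_frame_mat_eqI:
  assumes "null_frame u v" "mat_app M u = mat_app N u" "mat_app M v = mat_app N v"
  shows "M = N"
proof (rule mat_eqI)
  fix z
  show "mat_app M z = mat_app N z"
    using assms(2,3) by (subst (1 2) null_frame_decomp [OF assms(1), of z]) simp
qed

lemma null_frame_exists_mat:
  assumes "null_frame u v"
  shows "\<exists>M. mat_app M u = x \<and> mat_app M v = w"
proof -
  obtain u1 u2 v1 v2 x1 x2 w1 w2
    where vecs: "u = (u1, u2)" "v = (v1, v2)" "x = (x1, x2)" "w = (w1, w2)"
    by (cases u, cases v, cases x, cases w) auto
  define M where "M = (x1 * qcnj v2 + w1 * qcnj u2, x1 * qcnj v1 + w1 * qcnj u1,
                       x2 * qcnj v2 + w2 * qcnj u2, x2 * qcnj v1 + w2 * qcnj u1)"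
  have "mat_app M z = vscale x (hform z v) + vscale w (hform z u)" for z
    by (simp add: M_def vecs mat_app_eq vscale_eq hform_eq algebra_simps)
  hence "mat_app M u = x" "mat_app M v = w" using null_frameD [OF assms] by simp_all
  thus ?thesis by blast
qed

section \<open>The group Sp(1,1)\<close>

lemma mat_inv_eqI:
  assumes "mat_mul M N = mat_one" "mat_mul N M = mat_one"
  shows "mat_inv M = N"
  unfolding mat_inv_def
proof (rule the_equality)
  fix N' assume N': "mat_mul M N' = mat_one \<and> mat_mul N' M = mat_one"
  show "N' = N"
  proof (rule mat_eqI)
    fix z
    have "mat_app N' z = mat_app N' (mat_app M (mat_app N z))"
      using assms(1) by (metis mat_app_mat_mul mat_app_mat_one)
    also have "\<dots> = mat_app N z" using N' by (metis mat_app_mat_mul mat_app_mat_one)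
    finally show "mat_app N' z = mat_app N z" .
  qed
qed (use assms in simp)

lemma Sp11_mat_app_inv:
  assumes "M \<in> Sp11"
  shows "mat_app M (mat_app (mat_inv M) z) = z" "mat_app (mat_inv M) (mat_app M z) = z"
proof -
  obtain N where "mat_mul M N = mat_one" "mat_mul N M = mat_one"
    using assms unfolding Sp11_def mat_invertible_def by blast
  with mat_inv_eqI
  show "mat_app M (mat_app (mat_inv M) z) = z" "mat_app (mat_inv M) (mat_app M z) = z"
    by (metis mat_app_mat_mul mat_app_mat_one)+
qed

lemma Sp11_hform: "M \<in> Sp11 \<Longrightarrow> hform (mat_app M z) (mat_app M w) = hform z w"
  unfolding Sp11_def by blast

lemma Sp11_mat_app_eq_0_iff [simp]: "M \<in> Sp11 \<Longrightarrow> mat_app M z = 0 \<longleftrightarrow> z = 0"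
  by (metis Sp11_mat_app_inv(2) mat_app_zero)

lemma Sp11_if_maps_null_frame:
  assumes uv: "null_frame u v" and Muv: "null_frame (mat_app M u) (mat_app M v)"
  shows "M \<in> Sp11"
proof -
  obtain N where N: "mat_app N (mat_app M u) = u" "mat_app N (mat_app M v) = v"
    using null_frame_exists_mat [OF Muv] by blast
  have "mat_mul N M = mat_one"
    by (rule null_frame_mat_eqI [OF uv]) (simp_all add: mat_app_mat_mul N)
  moreover have "mat_mul M N = mat_one"
    by (rule null_frame_mat_eqI [OF Muv]) (simp_all add: mat_app_mat_mul N)
  moreover have "hform (mat_app M z) (mat_app M w) = hform z w" for z w
    using null_frame_hform [OF uv] null_frame_hform [OF Muv]
      null_frame_decomp [OF uv, of z] null_frame_decomp [OF uv, of w]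
    by (metis mat_app_add mat_app_vscale)
  ultimately show ?thesis unfolding Sp11_def mat_invertible_def by blast
qed

lemma Sp11_null_frame_eigenvalues:
  assumes "A \<in> Sp11" "null_frame u v"
    and "mat_app A u = vscale u a" "mat_app A v = vscale v d"
  shows "d = inverse (qcnj a)"
proof -
  have "qcnj d * a = 1"
    using Sp11_hform [OF assms(1), of u v] assms(3,4) null_frameD [OF assms(2)] by simp
  hence "qcnj d = inverse a" by (metis inverse_unique inverse_inverse_eq)
  thus ?thesis by (metis qcnj_qcnj qcnj_inverse)
qed

section \<open>Fixed points on the boundary\<close>

lemma card_2_obtain_other:
  assumes "card S = 2" "P \<in> S"
  obtains X where "X \<noteq> P" "S = {P, X}"
  using assms unfolding card_2_iff by (metis insert_commute insertE singletonD)

lemma qline_mat_app_eq_iff: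
  "qline (mat_app M z) = qline z \<longleftrightarrow> (\<exists>l. l \<noteq> 0 \<and> mat_app M z = vscale z l)"
proof
  assume "qline (mat_app M z) = qline z"
  then obtain m where "m \<noteq> 0" "z = vscale (mat_app M z) m" by (auto simp: qline_eq_iff)
  hence "mat_app M z = vscale z (inverse m)" by (metis vscale_vscale right_inverse vscale_one)
  with \<open>m \<noteq> 0\<close> show "\<exists>l. l \<noteq> 0 \<and> mat_app M z = vscale z l"
    by (intro exI [of _ "inverse m"]) simp
next
  assume "\<exists>l. l \<noteq> 0 \<and> mat_app M z = vscale z l"
  thus "qline (mat_app M z) = qline z" by (metis qline_eq_iff)
qed

lemma fixpts_qline_iff:
  assumes "z \<noteq> 0"
  shows "qline z \<in> fixpts M \<longleftrightarrow> hform z z = 0 \<and> (\<exists>l. l \<noteq> 0 \<and> mat_app M z = vscale z l)"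
proof
  assume z: "qline z \<in> fixpts M"
  then obtain z' where "qline z' = qline z" "hform z' z' = 0"
    unfolding fixpts_def bdry_def quat_class_ops by blast
  hence "hform z z = 0" by (auto simp: qline_eq_iff)
  moreover obtain z'' where "qline z'' = qline z" "qline (mat_app M z'') = qline z''"
    using z unfolding fixpts_def by auto
  then obtain m where "m \<noteq> 0" "z = vscale z'' m" by (auto simp: qline_eq_iff)
  hence "qline (mat_app M z'') = qline (mat_app M z)" by (auto simp: qline_eq_iff)
  hence "qline (mat_app M z) = qline z"
    using \<open>qline (mat_app M z'') = qline z''\<close> \<open>qline z'' = qline z\<close> by simp
  ultimately show "hform z z = 0 \<and> (\<exists>l. l \<noteq> 0 \<and> mat_app M z = vscale z l)"
    by (simp add: qline_mat_app_eq_iff)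
next
  assume "hform z z = 0 \<and> (\<exists>l. l \<noteq> 0 \<and> mat_app M z = vscale z l)"
  with assms show "qline z \<in> fixpts M"
    unfolding fixpts_def bdry_def quat_class_ops vzero_eq qline_mat_app_eq_iff [symmetric] by blast
qed

lemma fixpts_obtain: "p \<in> fixpts M \<Longrightarrow> \<exists>z. z \<noteq> 0 \<and> p = qline z"
  unfolding fixpts_def bdry_def vzero_eq by blast

lemma hyperbolic_null_frame:
  assumes "hyperbolic A" "P \<in> fixpts A"
  shows "\<exists>u v. null_frame u v \<and> P = qline u \<and> fixpts A = {qline u, qline v}"
proof -
  obtain X where "X \<noteq> P" "fixpts A = {P, X}"
    using assms card_2_obtain_other unfolding hyperbolic_def by metis
  moreover obtain u where u: "u \<noteq> 0" "P = qline u" using fixpts_obtain assms(2) by blast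
  moreover obtain v where v: "v \<noteq> 0" "X = qline v"
    using fixpts_obtain \<open>fixpts A = {P, X}\<close> by blast
  moreover have "hform u u = 0" "hform v v = 0"
    using u v fixpts_qline_iff \<open>fixpts A = {P, X}\<close> assms(2) by blast+
  ultimately obtain v' where "null_frame u v'" "qline v' = qline v"
    using null_frame_normalize by metis
  thus ?thesis
    using u v \<open>fixpts A = {P, X}\<close> by metis
qed

section \<open>Reversers\<close>

lemma psp_eq_iff_mat_app:
  "psp_eq M N \<longleftrightarrow> (\<exists>\<epsilon>. (\<epsilon> = 1 \<or> \<epsilon> = - 1) \<and> (\<forall>z. mat_app M z = vscale (mat_app N z) \<epsilon>))"
proof
  assume "psp_eq M N"
  thus "\<exists>\<epsilon>. (\<epsilon> = 1 \<or> \<epsilon> = - 1) \<and> (\<forall>z. mat_app M z = vscale (mat_app N z) \<epsilon>)"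
    unfolding psp_eq_def by (metis mat_app_mat_neg vscale_one)
next
  assume "\<exists>\<epsilon>. (\<epsilon> = 1 \<or> \<epsilon> = - 1) \<and> (\<forall>z. mat_app M z = vscale (mat_app N z) \<epsilon>)"
  thus "psp_eq M N"
    unfolding psp_eq_def by (metis mat_eqI mat_app_mat_neg vscale_one)
qed

definition reverses :: "qmat \<Rightarrow> qmat \<Rightarrow> bool" where
  "reverses g A \<longleftrightarrow> psp_eq (mat_mul (mat_mul g A) (mat_inv g)) (mat_inv A)"

lemma strongly_doubly_reversible_iff:
  "strongly_doubly_reversible A B \<longleftrightarrow>
     (\<exists>g\<in>Sp11. psp_eq (mat_mul g g) mat_one \<and> reverses g A \<and> reverses g B)"
  by (simp add: strongly_doubly_reversible_def reverses_def)

lemma reverses_iff: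
  assumes "A \<in> Sp11" "g \<in> Sp11"
  shows "reverses g A \<longleftrightarrow> (\<exists>\<epsilon>. (\<epsilon> = 1 \<or> \<epsilon> = - 1) \<and>
           (\<forall>z. mat_app A (mat_app g (mat_app A z)) = vscale (mat_app g z) \<epsilon>))"
proof -
  have "(\<forall>z. mat_app g (mat_app A (mat_app (mat_inv g) z)) = vscale (mat_app (mat_inv A) z) \<epsilon>)
    \<longleftrightarrow> (\<forall>z. mat_app A (mat_app g (mat_app A z)) = vscale (mat_app g z) \<epsilon>)" for \<epsilon>
    using Sp11_mat_app_inv [OF assms(1)] Sp11_mat_app_inv [OF assms(2)] by (metis mat_app_vscale)
  thus ?thesis by (simp add: reverses_def psp_eq_iff_mat_app mat_app_mat_mul)
qed

lemma reverses_fixpts: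
  assumes "A \<in> Sp11" "g \<in> Sp11" "reverses g A" "z \<noteq> 0" "qline z \<in> fixpts A"
  shows "qline (mat_app g z) \<in> fixpts A"
proof -
  obtain \<epsilon> where \<epsilon>: "\<epsilon> = 1 \<or> \<epsilon> = - 1" "mat_app A (mat_app g (mat_app A z)) = vscale (mat_app g z) \<epsilon>"
    using reverses_iff [OF assms(1,2)] assms(3) by blast
  obtain l where l: "l \<noteq> 0" "mat_app A z = vscale z l" and "hform z z = 0"
    using fixpts_qline_iff assms(4,5) by blast
  have "vscale (mat_app A (mat_app g z)) l = vscale (mat_app g z) \<epsilon>" using \<epsilon>(2) l(2) by simp
  hence "mat_app A (mat_app g z) = vscale (mat_app g z) (\<epsilon> * inverse l)"
    by (metis l(1) right_inverse vscale_one vscale_vscale)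
  moreover have "\<epsilon> * inverse l \<noteq> 0" using \<epsilon>(1) l(1) by auto
  moreover have "hform (mat_app g z) (mat_app g z) = 0"
    using Sp11_hform assms(2) \<open>hform z z = 0\<close> by simp
  moreover have "mat_app g z \<noteq> 0" using assms(2,4) by simp
  ultimately show ?thesis using fixpts_qline_iff by blast
qed

lemma reverses_fixing_point_unit:
  assumes "A \<in> Sp11" "g \<in> Sp11" "reverses g A" "u \<noteq> 0"
    and "mat_app A u = vscale u a" "mat_app g u = vscale u p" "p \<noteq> 0"
  shows "qnorm2 a = 1"
proof -
  obtain \<epsilon> where \<epsilon>: "\<epsilon> = 1 \<or> \<epsilon> = - 1" "mat_app A (mat_app g (mat_app A u)) = vscale (mat_app g u) \<epsilon>"
    using reverses_iff [OF assms(1,2)] assms(3) by blast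
  have "vscale u (a * p * a) = vscale u (p * \<epsilon>)" using \<epsilon>(2) assms(5,6) by (simp add: mult.assoc)
  hence "a * p * a = p * \<epsilon>" using vscale_cancel assms(4) by blast
  hence "qnorm2 (a * p * a) = qnorm2 (p * \<epsilon>)" by simp
  hence "qnorm2 a * qnorm2 a * qnorm2 p = qnorm2 p"
    using \<epsilon>(1) by (elim disjE) (simp_all add: qnorm2_mult ac_simps)
  hence "qnorm2 a * qnorm2 a = 1" using assms(7) by simp
  thus ?thesis using qnorm2_nonneg [of a] by (metis abs_of_nonneg abs_square_eq_1 power2_eq_square)
qed

lemma exists_third_fixpt_if_unit_eigenvalue:
  assumes "A \<in> Sp11" "null_frame u v"
    and "mat_app A u = vscale u a" "mat_app A v = vscale v d" "qnorm2 a = 1"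
  shows "\<exists>w. qline w \<in> fixpts A \<and> qline w \<noteq> qline u \<and> qline w \<noteq> qline v"
proof -
  note uv = null_frameD [OF assms(2)]
  have "d = a"
    using Sp11_null_frame_eigenvalues [OF assms(1-4)] assms(5)
    by (simp add: qcnj_inverse [symmetric] inverse_eq_qcnj_if_unit)
  obtain y where y: "y \<noteq> 0" "qcnj y = - y" "y * a = a * y" using exists_pure_commuting by blast
  define w where "w = u + vscale v y"
  have "hform w u = y" "hform w v = 1" "hform w w = 0" by (simp_all add: w_def uv y(2))
  have "mat_app A w = vscale w a" by (simp add: w_def assms(3,4) \<open>d = a\<close> vscale_add_left y(3))
  moreover have "w \<noteq> 0" using \<open>hform w v = 1\<close> by auto
  moreover have "a \<noteq> 0" using assms(5) by (metis qnorm2_eq_0 zero_neq_one)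
  ultimately have "qline w \<in> fixpts A" using fixpts_qline_iff \<open>hform w w = 0\<close> by blast
  moreover have "qline w \<noteq> qline u"
    using hform_eq_0_if_qline_eq [of u w] uv(1) \<open>hform w u = y\<close> y(1) by auto
  moreover have "qline w \<noteq> qline v"
    using hform_eq_0_if_qline_eq [of v w] uv(2) \<open>hform w v = 1\<close> by auto
  ultimately show ?thesis by blast
qed

lemma fixpts_eq_if_strongly_doubly_reversible:
  assumes "A \<in> Sp11" "B \<in> Sp11" "hyperbolic A" "hyperbolic B"
    and "P \<in> fixpts A" "P \<in> fixpts B" "strongly_doubly_reversible A B"
  shows "fixpts A = fixpts B"
proof (rule ccontr)
  assume "fixpts A \<noteq> fixpts B"
  moreover obtain X Y where "fixpts A = {P, X}" "fixpts B = {P, Y}"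
    using assms(3-6) card_2_obtain_other unfolding hyperbolic_def by metis
  ultimately have common: "fixpts A \<inter> fixpts B = {P}" by auto
  obtain u v where uv: "null_frame u v" "P = qline u" "fixpts A = {qline u, qline v}"
    using hyperbolic_null_frame assms(3,5) by blast
  note u_v = null_frameD [OF uv(1)]
  obtain g where g: "g \<in> Sp11" "reverses g A" "reverses g B"
    using assms(7) unfolding strongly_doubly_reversible_iff by blast
  have "qline (mat_app g u) \<in> fixpts A \<inter> fixpts B"
    using reverses_fixpts assms(1,2,5,6) g u_v(5) uv(2) by blast
  hence "qline u = qline (mat_app g u)" using common uv(2) by blast
  then obtain p where "p \<noteq> 0" "mat_app g u = vscale u p" by (auto simp: qline_eq_iff)
  moreover obtain a where "mat_app A u = vscale u a"
    using fixpts_qline_iff assms(5) uv(2) u_v(5) by blast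
  moreover obtain d where "mat_app A v = vscale v d" using fixpts_qline_iff uv(3) u_v(6) by blast
  ultimately obtain w where "qline w \<in> fixpts A" "qline w \<noteq> qline u" "qline w \<noteq> qline v"
    using reverses_fixing_point_unit exists_third_fixpt_if_unit_eigenvalue assms(1) g uv(1) u_v(5)
    by metis
  thus False using uv(3) by blast
qed

lemma reverses_if_swaps_null_frame:
  assumes "A \<in> Sp11" "G \<in> Sp11" "null_frame u v"
    and "mat_app A u = vscale u a" "mat_app A v = vscale v d"
    and "y \<noteq> 0" "a * y = y * qcnj a"
    and "mat_app G u = vscale v (- inverse y)" "mat_app G v = vscale u y"
  shows "reverses G A"
proof -
  have d: "d = inverse (qcnj a)" using Sp11_null_frame_eigenvalues assms(1-5) by blast
  have "a \<noteq> 0"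
    using assms(1,4) null_frameD(5) [OF assms(3)] by (metis Sp11_mat_app_eq_0_iff vscale_zero)
  have "inverse y * inverse a = inverse (qcnj a) * inverse y"
    using assms(6,7) \<open>a \<noteq> 0\<close> by (metis nonzero_inverse_mult_distrib qcnj_eq_0_iff)
  hence "d * inverse y * a = inverse y"
    using \<open>a \<noteq> 0\<close> by (metis d left_inverse mult.assoc mult_1_right)
  moreover have "a * y * d = y" using \<open>a \<noteq> 0\<close> by (simp add: d assms(7) mult.assoc)
  ultimately have "mat_mul A (mat_mul G A) = G"
    by (intro null_frame_mat_eqI [OF assms(3)])
      (simp_all add: mat_app_mat_mul assms(4,5,8,9) mult.assoc)
  thus ?thesis using reverses_iff [OF assms(1,2)] by (metis mat_app_mat_mul vscale_one)
qed

lemma strongly_doubly_reversible_if_common_null_frame: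
  assumes "A \<in> Sp11" "B \<in> Sp11" "null_frame u v"
    and "mat_app A u = vscale u a" "mat_app A v = vscale v d"
    and "mat_app B u = vscale u b" "mat_app B v = vscale v e"
  shows "strongly_doubly_reversible A B"
proof -
  obtain y where y: "y \<noteq> 0" "qcnj y = - y" "a * y = y * qcnj a" "b * y = y * qcnj b"
    using exists_pure_mult_eq_mult_qcnj by blast
  obtain G where G: "mat_app G u = vscale v (- inverse y)" "mat_app G v = vscale u y"
    using null_frame_exists_mat [OF assms(3)] by blast
  have "null_frame (mat_app G u) (mat_app G v)"
    using null_frameD [OF assms(3)] y(1,2) by (simp add: G null_frame_def)
  hence "G \<in> Sp11" using Sp11_if_maps_null_frame assms(3) by blast
  moreover have "mat_mul G G = mat_neg mat_one"
    by (rule null_frame_mat_eqI [OF assms(3)])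
      (simp_all add: mat_app_mat_mul mat_app_mat_neg G y(1))
  ultimately show ?thesis
    unfolding strongly_doubly_reversible_iff psp_eq_def
    using reverses_if_swaps_null_frame assms G y by blast
qed

theorem proposition6p1:
  assumes "A \<in> Sp11" and "B \<in> Sp11"
    and "hyperbolic A" and "hyperbolic B"
    and "fixpts A \<inter> fixpts B \<noteq> {}"
  shows "strongly_doubly_reversible A B \<longleftrightarrow> fixpts A = fixpts B"
proof
  obtain P where P: "P \<in> fixpts A" "P \<in> fixpts B" using assms(5) by blast
  show "strongly_doubly_reversible A B \<Longrightarrow> fixpts A = fixpts B"
    using fixpts_eq_if_strongly_doubly_reversible assms(1-4) P by blast
  assume same: "fixpts A = fixpts B"
  obtain u v where uv: "null_frame u v" "fixpts A = {qline u, qline v}"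
    using hyperbolic_null_frame assms(3) P(1) by blast
  have "\<exists>l. mat_app M z = vscale z l" if "fixpts M = fixpts A" "z \<in> {u, v}" for M z
    using that uv fixpts_qline_iff null_frameD(5,6) [OF uv(1)] by blast
  then obtain a d b e where "mat_app A u = vscale u a" "mat_app A v = vscale v d"
    "mat_app B u = vscale u b" "mat_app B v = vscale v e"
    using same by (metis insertCI)
  thus "strongly_doubly_reversible A B"
    using strongly_doubly_reversible_if_common_null_frame assms(1,2) uv(1) by blast
qed

end
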